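(* For every $\gamma\in(0,1]$, the ReportNoisyMax mechanism with Laplace scale $b=4/\gamma$ is $\gamma$-approximately truthful.
   Context: Setting: $n$ forecasters, $m$ binary events with outcomes $\vec y\in\{0,1\}^m$; forecaster $i$ has beliefs $p_i\in[0,1]^m$ (believing events independent) and reports $r_i\in[0,1]^m$. Quadratic score $S(q,y)=1-(y-q)^2$. ReportNoisyMax with scale $b>0$: compute $q_j=\sum_tS(r_{jt},y_t)$, draw independent $W_1,\dots,W_n$ with Laplace density $\frac1{2b}e^{-|w|/b}$, and select $\arg\max_j(q_j+W_j)$; $M(R,\vec y)$ is the resulting distribution over winners. $M(R;p_i)=\mathbb{E}_{\vec y\sim p_i}M(R,\vec y)$ with $y_t\sim\mathrm{Bernoulli}(p_{it})$ independently. For fixed $p_i$, $\hat r_i$ strictly dominates $r_i$ if $M(\hat r_i,R_{-i};p_i)_i>M(r_i,R_{-i};p_i)_i$ for all $R_{-i}$; $r_i$ is undominated otherwise. $\gamma$-approximately truthful: for all $p_i$ an undominated report exists and every undominated $r_i$ satisfies $\|r_i-p_i\|_\infty\le\gamma$. *)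

theory Defs
  imports "HOL-Probability.Probability"
begin

text \<open>Forecasters are indexed by 0..<n, events by 0..<m.
  A report profile is R :: nat => nat => real, R j t = report of forecaster j on event t.
  An outcome vector y in {0,1}^m is encoded by the set Y of indices t < m with y_t = 1.\<close>

definition quad_score :: "real \<Rightarrow> real \<Rightarrow> real" where
  "quad_score q y = 1 - (y - q)^2"

definition outcome :: "nat set \<Rightarrow> nat \<Rightarrow> real" where
  "outcome Y t = (if t \<in> Y then 1 else 0)"

definition total_score :: "nat \<Rightarrow> (nat \<Rightarrow> real) \<Rightarrow> nat set \<Rightarrow> real" where
  "total_score m r Y = (\<Sum>t<m. quad_score (r t) (outcome Y t))"

definition laplace :: "real \<Rightarrow> real measure" where
  "laplace b = density lborel (\<lambda>w. ennreal (exp (- \<bar>w\<bar> / b) / (2 * b)))"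

text \<open>Probability that ReportNoisyMax selects forecaster i, for outcome Y.
  Ties occur with probability zero, so selecting i means beating every other score strictly.\<close>
definition rnm_win :: "real \<Rightarrow> nat \<Rightarrow> nat \<Rightarrow> (nat \<Rightarrow> nat \<Rightarrow> real) \<Rightarrow> nat set \<Rightarrow> nat \<Rightarrow> real" where
  "rnm_win b n m R Y i =
     measure (PiM {..<n} (\<lambda>_. laplace b))
       {W \<in> space (PiM {..<n} (\<lambda>_. laplace b)).
          \<forall>j<n. j \<noteq> i \<longrightarrow> total_score m (R j) Y + W j < total_score m (R i) Y + W i}"

definition outcome_prob :: "nat \<Rightarrow> (nat \<Rightarrow> real) \<Rightarrow> nat set \<Rightarrow> real" where
  "outcome_prob m p Y = (\<Prod>t<m. if t \<in> Y then p t else 1 - p t)"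

definition rnm_win_exp :: "real \<Rightarrow> nat \<Rightarrow> nat \<Rightarrow> (nat \<Rightarrow> nat \<Rightarrow> real) \<Rightarrow> (nat \<Rightarrow> real) \<Rightarrow> nat \<Rightarrow> real" where
  "rnm_win_exp b n m R p i = (\<Sum>Y\<in>Pow {..<m}. outcome_prob m p Y * rnm_win b n m R Y i)"

definition valid_vec :: "nat \<Rightarrow> (nat \<Rightarrow> real) \<Rightarrow> bool" where
  "valid_vec m r \<longleftrightarrow> (\<forall>t<m. 0 \<le> r t \<and> r t \<le> 1)"

definition strictly_dominates ::
  "real \<Rightarrow> nat \<Rightarrow> nat \<Rightarrow> nat \<Rightarrow> (nat \<Rightarrow> real) \<Rightarrow> (nat \<Rightarrow> real) \<Rightarrow> (nat \<Rightarrow> real) \<Rightarrow> bool" where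
  "strictly_dominates b n m i p rh r \<longleftrightarrow>
     (\<forall>R. (\<forall>j<n. j \<noteq> i \<longrightarrow> valid_vec m (R j)) \<longrightarrow>
        rnm_win_exp b n m (R(i := r)) p i < rnm_win_exp b n m (R(i := rh)) p i)"

definition undominated ::
  "real \<Rightarrow> nat \<Rightarrow> nat \<Rightarrow> nat \<Rightarrow> (nat \<Rightarrow> real) \<Rightarrow> (nat \<Rightarrow> real) \<Rightarrow> bool" where
  "undominated b n m i p r \<longleftrightarrow>
     \<not> (\<exists>rh. valid_vec m rh \<and> strictly_dominates b n m i p rh r)"

definition approx_truthful :: "real \<Rightarrow> nat \<Rightarrow> nat \<Rightarrow> real \<Rightarrow> bool" where
  "approx_truthful b n m \<gamma> \<longleftrightarrow>
     (\<forall>i<n. \<forall>p. valid_vec m p \<longrightarrow>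
        (\<exists>r. valid_vec m r \<and> undominated b n m i p r) \<and>
        (\<forall>r. valid_vec m r \<and> undominated b n m i p r \<longrightarrow> (\<forall>t<m. \<bar>r t - p t\<bar> \<le> \<gamma>)))"

end

theory Submission
  imports Defs
begin

(* Suppose forecaster i reports r with |r t - p t| > \<gamma> for some event t, say r t > p t.
   Fix the outcomes of all other events and the rivals' noise. Replacing r t by p t moves i's
   score down by (1 - p t)^2 - (1 - r t)^2 if event t occurs and up by (r t)^2 - (p t)^2 if it does
   not, and i's winning probability changes by the Laplace mass of an interval of that length.
   Since every score moves by at most 1 between the two outcomes, the Laplace density varies by at
   most the factor exp (4 / b) = exp \<gamma> across the intervals involved, and for \<gamma> \<le> 1 the
   quadratic score makes the expected gain outweigh the loss. Hence r(t := p t) strictly dominates r.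
   Undominated reports exist: a maximiser of the expected winning probability against one fixed
   profile of rivals, which exists by continuity and compactness, cannot be strictly dominated. *)

definition laplace_density :: "real \<Rightarrow> real \<Rightarrow> real" where
  "laplace_density b w = exp (- \<bar>w\<bar> / b) / (2 * b)"

lemma laplace_density_pos: "0 < b \<Longrightarrow> 0 < laplace_density b w"
  by (simp add: laplace_density_def)

lemma laplace_density_le: "0 < b \<Longrightarrow> laplace_density b w \<le> 1 / (2 * b)"
  by (simp add: laplace_density_def divide_right_mono)

lemma laplace_density_ratio:
  assumes "0 < b"
  shows "laplace_density b u \<le> laplace_density b v * exp (\<bar>u - v\<bar> / b)"
proof -
  have "- \<bar>u\<bar> / b \<le> (- \<bar>v\<bar> + \<bar>u - v\<bar>) / b"
    using assms by (intro divide_right_mono) auto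
  then have "exp (- \<bar>u\<bar> / b) \<le> exp (- \<bar>v\<bar> / b) * exp (\<bar>u - v\<bar> / b)"
    by (simp add: exp_add[symmetric] diff_divide_distrib)
  then show ?thesis
    using assms by (simp add: laplace_density_def divide_right_mono mult.commute mult.left_commute)
qed

lemma laplace_eq_density: "laplace b = density lborel (\<lambda>w. ennreal (laplace_density b w))"
  by (simp add: laplace_def laplace_density_def)

lemma borel_measurable_laplace_density[measurable]: "laplace_density b \<in> borel_measurable borel"
  unfolding laplace_density_def by measurable

lemma sets_laplace[simp]: "sets (laplace b) = sets borel"
  by (simp add: laplace_def)

lemma space_laplace[simp]: "space (laplace b) = UNIV"
  by (simp add: laplace_def)

text \<open>The Laplace density is the exponential density of rate 1/b, symmetrised.\<close>
lemma nn_integral_laplace_density: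
  assumes b: "0 < b"
  shows "(\<integral>\<^sup>+w. ennreal (laplace_density b w) \<partial>lborel) = 1"
proof -
  define e where "e = exponential_density (1 / b)"
  have e_total: "(\<integral>\<^sup>+w. ennreal (e w) \<partial>lborel) = 1"
    using prob_space.emeasure_space_1[OF prob_space_exponential_density[of "1 / b"]] b
    by (simp add: e_def emeasure_density)
  have e_reflect: "(\<integral>\<^sup>+w. ennreal (e (- w)) \<partial>lborel) = (\<integral>\<^sup>+w. ennreal (e w) \<partial>lborel)"
    by (subst nn_integral_real_affine[where c = "-1" and t = 0]) (auto simp: e_def)
  have AE: "AE w in lborel. ennreal (2 * laplace_density b w) = ennreal (e w) + ennreal (e (- w))"
    using AE_lborel_singleton[of 0]
    by eventually_elim (use b in \<open>auto simp: e_def exponential_density_def laplace_density_def\<close>)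
  have "2 * (\<integral>\<^sup>+w. ennreal (laplace_density b w) \<partial>lborel)
      = (\<integral>\<^sup>+w. ennreal (2 * laplace_density b w) \<partial>lborel)"
    using b by (simp add: ennreal_mult laplace_density_pos less_imp_le nn_integral_cmult)
  also have "\<dots> = (\<integral>\<^sup>+w. ennreal (e w) + ennreal (e (- w)) \<partial>lborel)"
    using AE by (rule nn_integral_cong_AE)
  also have "\<dots> = (\<integral>\<^sup>+w. ennreal (e w) \<partial>lborel) + (\<integral>\<^sup>+w. ennreal (e (- w)) \<partial>lborel)"
    by (rule nn_integral_add) (auto simp: e_def)
  also have "\<dots> = 2 * 1" using e_total e_reflect by simp
  finally show ?thesis by (subst (asm) ennreal_mult_cancel_left) simp
qed

lemma prob_space_laplace: "0 < b \<Longrightarrow> prob_space (laplace b)"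
  by (intro prob_spaceI) (simp add: laplace_eq_density emeasure_density nn_integral_laplace_density)

lemma emeasure_laplace_interval:
  "emeasure (laplace b) {a<..a+d} = (\<integral>\<^sup>+w. ennreal (laplace_density b w) * indicator {a<..a+d} w \<partial>lborel)"
  by (simp add: laplace_eq_density emeasure_density)

lemma measure_laplace_interval_le:
  assumes b: "0 < b" and d: "0 \<le> d" and C: "0 \<le> C"
    and bound: "\<And>w. w \<in> {a<..a+d} \<Longrightarrow> laplace_density b w \<le> C"
  shows "measure (laplace b) {a<..a+d} \<le> C * d"
proof -
  interpret prob_space "laplace b" using b by (rule prob_space_laplace)
  have "emeasure (laplace b) {a<..a+d} \<le> (\<integral>\<^sup>+w. ennreal C * indicator {a<..a+d} w \<partial>lborel)"
    unfolding emeasure_laplace_interval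
    by (intro nn_integral_mono) (auto simp: bound ennreal_leI split: split_indicator)
  also have "\<dots> = ennreal (C * d)"
    using d C by (simp add: nn_integral_cmult_indicator ennreal_mult)
  finally show ?thesis using C d by (simp add: emeasure_eq_measure ennreal_le_iff)
qed

lemma measure_laplace_interval_ge:
  assumes b: "0 < b" and d: "0 \<le> d"
    and bound: "\<And>w. w \<in> {a<..a+d} \<Longrightarrow> C \<le> laplace_density b w"
  shows "C * d \<le> measure (laplace b) {a<..a+d}"
proof (cases "C \<le> 0")
  case True
  then show ?thesis using d by (simp add: mult_nonpos_nonneg order_trans[OF _ measure_nonneg])
next
  case False
  interpret prob_space "laplace b" using b by (rule prob_space_laplace)
  have "ennreal (C * d) = (\<integral>\<^sup>+w. ennreal C * indicator {a<..a+d} w \<partial>lborel)"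
    using d False by (simp add: nn_integral_cmult_indicator ennreal_mult)
  also have "\<dots> \<le> emeasure (laplace b) {a<..a+d}"
    unfolding emeasure_laplace_interval
    by (intro nn_integral_mono) (auto simp: bound ennreal_leI split: split_indicator)
  finally show ?thesis by (simp add: emeasure_eq_measure)
qed

lemma laplace_density_shift_ge:
  assumes b: "0 < b" and uv: "\<bar>u - v\<bar> \<le> K"
  shows "laplace_density b u * exp (- K / b) \<le> laplace_density b v"
proof -
  have "exp (\<bar>u - v\<bar> / b) \<le> exp (K / b)"
    using uv b by (simp add: divide_right_mono)
  then have "laplace_density b u \<le> laplace_density b v * exp (K / b)"
    using laplace_density_ratio[OF b, of u v] laplace_density_pos[OF b, of v]
    by (meson mult_left_mono less_imp_le order_trans)
  from mult_right_mono[OF this, of "exp (- K / b)"] show ?thesis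
    by (simp add: mult.assoc exp_minus_inverse)
qed

lemma measure_laplace_interval_pos:
  assumes b: "0 < b" and d: "0 < d"
  shows "0 < measure (laplace b) {a<..a+d}"
proof -
  have "laplace_density b a * exp (- d / b) * d \<le> measure (laplace b) {a<..a+d}"
    using d by (intro measure_laplace_interval_ge[OF b] laplace_density_shift_ge[OF b]) auto
  moreover have "0 < laplace_density b a * exp (- d / b) * d"
    using d laplace_density_pos[OF b] by simp
  ultimately show ?thesis by linarith
qed

lemma measure_laplace_interval_compare:
  assumes b: "0 < b" and d0: "0 < d0" and d1: "0 \<le> d1"
    and close: "\<And>u v. u \<in> {a1<..a1+d1} \<Longrightarrow> v \<in> {a0<..a0+d0} \<Longrightarrow> \<bar>u - v\<bar> \<le> K"
  shows "measure (laplace b) {a1<..a1+d1} \<le> d1 / d0 * exp (K / b) * measure (laplace b) {a0<..a0+d0}"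
proof -
  define q0 where "q0 = measure (laplace b) {a0<..a0+d0}"
  have "laplace_density b u \<le> exp (K / b) * q0 / d0" if u: "u \<in> {a1<..a1+d1}" for u
  proof -
    have "laplace_density b u * exp (- K / b) * d0 \<le> q0"
      unfolding q0_def using d0
      by (intro measure_laplace_interval_ge[OF b] laplace_density_shift_ge[OF b] close[OF u]) auto
    then show ?thesis using d0 by (simp add: exp_minus field_simps)
  qed
  then have "measure (laplace b) {a1<..a1+d1} \<le> exp (K / b) * q0 / d0 * d1"
    using d0 d1 by (intro measure_laplace_interval_le[OF b]) (auto simp: q0_def)
  then show ?thesis by (simp add: q0_def field_simps)
qed

locale report_noisy_max =
  fixes b :: real and n i :: nat
  assumes scale_pos: "0 < b" and two_le_n: "2 \<le> n" and i_lt_n: "i < n"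
begin

abbreviation "Noise \<equiv> PiM {..<n} (\<lambda>_. laplace b)"
abbreviation "rivals \<equiv> {..<n} - {i}"
abbreviation "Rival_noise \<equiv> PiM rivals (\<lambda>_. laplace b)"

sublocale Lap: prob_space "laplace b"
  using scale_pos by (rule prob_space_laplace)

sublocale Rivals: product_prob_space "\<lambda>_. laplace b" rivals
  by (auto simp: product_prob_space_def product_prob_space_axioms_def product_sigma_finite_def
      Lap.prob_space_axioms prob_space_imp_sigma_finite)

sublocale Noise: prob_space Noise
  by (rule prob_space_PiM) (rule Lap.prob_space_axioms)

lemma insert_rivals: "insert i rivals = {..<n}"
  using i_lt_n by auto

lemma rivals_nonempty: "rivals \<noteq> {}"
proof -
  have "(if i = 0 then 1 else 0) \<in> rivals" using two_le_n i_lt_n by auto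
  then show ?thesis by blast
qed

definition win_event :: "(nat \<Rightarrow> real) \<Rightarrow> real \<Rightarrow> (nat \<Rightarrow> real) set" where
  "win_event c x = {W \<in> space Noise. \<forall>j<n. j \<noteq> i \<longrightarrow> c j + W j < x + W i}"

definition win_prob :: "(nat \<Rightarrow> real) \<Rightarrow> real \<Rightarrow> real" where
  "win_prob c x = measure Noise (win_event c x)"

definition rival_max :: "(nat \<Rightarrow> real) \<Rightarrow> (nat \<Rightarrow> real) \<Rightarrow> real" where
  "rival_max c w = Max ((\<lambda>j. c j + w j) ` rivals)"

lemma rival_max_less_iff: "rival_max c w < z \<longleftrightarrow> (\<forall>j<n. j \<noteq> i \<longrightarrow> c j + w j < z)"
  unfolding rival_max_def using rivals_nonempty by (subst Max_less_iff) auto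

lemma rival_max_le:
  assumes "\<And>j. j < n \<Longrightarrow> j \<noteq> i \<Longrightarrow> c' j \<le> c j + \<delta>"
  shows "rival_max c' w \<le> rival_max c w + \<delta>"
proof -
  have "c' j + w j \<le> Max ((\<lambda>j. c j + w j) ` rivals) + \<delta>" if j: "j \<in> rivals" for j
  proof -
    have "c j + w j \<le> Max ((\<lambda>j. c j + w j) ` rivals)"
      using j by (intro Max_ge) auto
    moreover have "c' j \<le> c j + \<delta>" using assms j by auto
    ultimately show ?thesis by linarith
  qed
  then show ?thesis
    unfolding rival_max_def using rivals_nonempty by (subst Max_le_iff) auto
qed

lemma rival_max_close:
  assumes "\<And>j. j < n \<Longrightarrow> j \<noteq> i \<Longrightarrow> \<bar>c' j - c j\<bar> \<le> \<delta>"
  shows "\<bar>rival_max c' w - rival_max c w\<bar> \<le> \<delta>"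
proof -
  have "rival_max c' w \<le> rival_max c w + \<delta>"
    by (rule rival_max_le) (use assms in \<open>force simp: abs_le_iff\<close>)
  moreover have "rival_max c w \<le> rival_max c' w + \<delta>"
    by (rule rival_max_le) (use assms in \<open>force simp: abs_le_iff\<close>)
  ultimately show ?thesis by (simp add: abs_le_iff)
qed

lemma measurable_noise_component:
  "j < n \<Longrightarrow> (\<lambda>W. W j) \<in> borel_measurable Noise"
  using measurable_component_singleton[of j "{..<n}" "\<lambda>_. laplace b"]
  by (simp add: measurable_cong_sets[OF refl sets_laplace])

lemma win_event_sets: "win_event c x \<in> sets Noise"
proof -
  have "{W \<in> space Noise. c j + W j < x + W i} \<in> sets Noise" if "j \<in> rivals" for j
  proof -
    have [measurable]: "(\<lambda>W. W j) \<in> borel_measurable Noise" "(\<lambda>W. W i) \<in> borel_measurable Noise"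
      using that i_lt_n by (auto intro: measurable_noise_component)
    show ?thesis by measurable
  qed
  then have "{W \<in> space Noise. \<forall>j\<in>rivals. c j + W j < x + W i} \<in> sets Noise"
    by (intro sets.sets_Collect_finite_All) auto
  moreover have "win_event c x = {W \<in> space Noise. \<forall>j\<in>rivals. c j + W j < x + W i}"
    unfolding win_event_def by auto
  ultimately show ?thesis by simp
qed

lemma win_event_mono: "x \<le> x' \<Longrightarrow> win_event c x \<subseteq> win_event c x'"
  unfolding win_event_def by force

lemma fun_upd_mem_win_event_iff:
  assumes "w \<in> space Rival_noise"
  shows "w(i := y) \<in> win_event c z \<longleftrightarrow> rival_max c w < z + y"
proof -
  have "w(i := y) \<in> space Noise"
    using assms i_lt_n by (auto simp: space_PiM PiE_iff extensional_def)
  then show ?thesis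
    unfolding win_event_def rival_max_less_iff by auto
qed

lemma nn_integral_fun_upd_win_event:
  assumes "w \<in> space Rival_noise"
  shows "(\<integral>\<^sup>+y. indicator (win_event c x' - win_event c x) (w(i := y)) \<partial>laplace b)
    = emeasure (laplace b) {rival_max c w - x' <.. rival_max c w - x}"
proof -
  have "indicator (win_event c x' - win_event c x) (w(i := y))
      = (indicator {rival_max c w - x' <.. rival_max c w - x} y :: ennreal)" for y
    using fun_upd_mem_win_event_iff[OF assms] by (auto split: split_indicator)
  then show ?thesis by simp
qed

lemma win_event_diff_sets: "win_event c x' - win_event c x \<in> sets (PiM (insert i rivals) (\<lambda>_. laplace b))"
  unfolding insert_rivals using win_event_sets by blast

lemma borel_measurable_laplace_rival_interval:
  "(\<lambda>w. emeasure (laplace b) {rival_max c w - x' <.. rival_max c w - x}) \<in> borel_measurable Rival_noise"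
proof -
  have [measurable]: "win_event c x' - win_event c x \<in> sets (PiM (insert i rivals) (\<lambda>_. laplace b))"
    by (rule win_event_diff_sets)
  have "(\<lambda>w. \<integral>\<^sup>+y. indicator (win_event c x' - win_event c x) (w(i := y)) \<partial>laplace b)
      \<in> borel_measurable Rival_noise"
    by measurable
  then show ?thesis
    by (rule measurable_cong[THEN iffD1, rotated]) (simp add: nn_integral_fun_upd_win_event)
qed

text \<open>Fubini over the own noise term: for fixed rival noise w, raising the own score from
  x to x' turns a loss into a win exactly when the own noise lies in an interval of length x' - x.\<close>
lemma win_prob_increment:
  assumes "x \<le> x'"
  shows "ennreal (win_prob c x' - win_prob c x)
    = (\<integral>\<^sup>+w. emeasure (laplace b) {rival_max c w - x' <.. rival_max c w - x} \<partial>Rival_noise)"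
proof -
  let ?A = "win_event c x' - win_event c x"
  have "win_prob c x' - win_prob c x = measure Noise ?A"
    using win_event_mono[OF assms] win_event_sets by (simp add: win_prob_def Noise.finite_measure_Diff)
  then have "ennreal (win_prob c x' - win_prob c x) = (\<integral>\<^sup>+W. indicator ?A W \<partial>Noise)"
    using win_event_sets by (simp add: Noise.emeasure_eq_measure)
  also have "\<dots> = (\<integral>\<^sup>+W. indicator ?A W \<partial>PiM (insert i rivals) (\<lambda>_. laplace b))"
    by (simp only: insert_rivals)
  also have "\<dots> = (\<integral>\<^sup>+w. (\<integral>\<^sup>+y. indicator ?A (w(i := y)) \<partial>laplace b) \<partial>Rival_noise)"
    by (rule Rivals.product_nn_integral_insert[OF _ _ borel_measurable_indicator[OF win_event_diff_sets]])
      auto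
  also have "\<dots> = (\<integral>\<^sup>+w. emeasure (laplace b) {rival_max c w - x' <.. rival_max c w - x} \<partial>Rival_noise)"
    by (intro nn_integral_cong nn_integral_fun_upd_win_event)
  finally show ?thesis .
qed

lemma win_prob_strict_mono:
  assumes d: "0 < d"
  shows "win_prob c x < win_prob c (x + d)"
proof -
  let ?f = "\<lambda>w. emeasure (laplace b) {rival_max c w - (x + d) <.. rival_max c w - x}"
  have "?f w \<noteq> 0" for w
    using measure_laplace_interval_pos[OF scale_pos d, of "rival_max c w - (x + d)"]
    by (simp add: Lap.emeasure_eq_measure)
  then have "\<not> (AE w in Rival_noise. ?f w = 0)"
    using Rivals.AE_False by (auto dest: AE_E2)
  then have "(\<integral>\<^sup>+w. ?f w \<partial>Rival_noise) \<noteq> 0"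
    by (simp add: nn_integral_0_iff_AE borel_measurable_laplace_rival_interval)
  then have "ennreal (win_prob c (x + d) - win_prob c x) \<noteq> 0"
    using d by (simp add: win_prob_increment)
  then show ?thesis by (simp add: ennreal_eq_0_iff)
qed

lemma win_prob_increment_le:
  assumes "x \<le> x'"
  shows "win_prob c x' - win_prob c x \<le> (x' - x) / (2 * b)"
proof -
  have "ennreal (win_prob c x' - win_prob c x)
      \<le> (\<integral>\<^sup>+w. ennreal ((x' - x) / (2 * b)) \<partial>Rival_noise)"
    unfolding win_prob_increment[OF assms]
  proof (rule nn_integral_mono)
    fix w
    have "measure (laplace b) {rival_max c w - x' <.. rival_max c w - x' + (x' - x)} \<le> 1 / (2 * b) * (x' - x)"
      using assms scale_pos by (intro measure_laplace_interval_le laplace_density_le) auto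
    then show "emeasure (laplace b) {rival_max c w - x' <.. rival_max c w - x} \<le> ennreal ((x' - x) / (2 * b))"
      by (simp add: Lap.emeasure_eq_measure ennreal_leI)
  qed
  then show ?thesis
    using assms scale_pos by (simp add: Rivals.emeasure_space_1 ennreal_le_iff)
qed

lemma win_prob_mono: "x \<le> x' \<Longrightarrow> win_prob c x \<le> win_prob c x'"
  unfolding win_prob_def by (intro Noise.finite_measure_mono win_event_mono win_event_sets)

lemma continuous_on_win_prob: "continuous_on UNIV (win_prob c)"
proof (rule lipschitz_on_continuous_on)
  show "(1 / (2 * b))-lipschitz_on UNIV (win_prob c)"
  proof (rule lipschitz_onI)
    fix x y :: real
    have "\<bar>win_prob c x - win_prob c y\<bar> \<le> \<bar>x - y\<bar> / (2 * b)"
      using win_prob_increment_le[of x y c] win_prob_mono[of x y c]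
        win_prob_increment_le[of y x c] win_prob_mono[of y x c]
      by (cases "x \<le> y") (auto simp: abs_if)
    then show "dist (win_prob c x) (win_prob c y) \<le> 1 / (2 * b) * dist x y"
      by (simp add: dist_real_def)
  qed (use scale_pos in simp)
qed

text \<open>Rival scores moving by at most 1, the own score by at most 1 and the two shifts
  adding up to at most 2 keep the relevant noise intervals within distance 4 of each other.\<close>
lemma win_prob_loss_le_gain:
  assumes close: "\<And>j. j < n \<Longrightarrow> j \<noteq> i \<Longrightarrow> \<bar>cL j - cG j\<bar> \<le> 1"
    and xLG: "\<bar>xL - xG\<bar> \<le> 1" and dL: "0 \<le> dL" and dG: "0 < dG" and dLG: "dL + dG \<le> 2"
  shows "win_prob cL xL - win_prob cL (xL - dL)
    \<le> dL / dG * exp (4 / b) * (win_prob cG (xG + dG) - win_prob cG xG)"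
proof -
  define \<kappa> where "\<kappa> = dL / dG * exp (4 / b)"
  have \<kappa>: "0 \<le> \<kappa>" unfolding \<kappa>_def using dL dG by simp
  have "ennreal (win_prob cL xL - win_prob cL (xL - dL))
      = (\<integral>\<^sup>+w. emeasure (laplace b) {rival_max cL w - xL <.. rival_max cL w - (xL - dL)} \<partial>Rival_noise)"
    using dL by (intro win_prob_increment) simp
  also have "\<dots> \<le> (\<integral>\<^sup>+w. ennreal \<kappa> * emeasure (laplace b) {rival_max cG w - (xG + dG) <.. rival_max cG w - xG} \<partial>Rival_noise)"
  proof (rule nn_integral_mono)
    fix w
    define aL where "aL = rival_max cL w - xL"
    define aG where "aG = rival_max cG w - (xG + dG)"
    have "\<bar>rival_max cL w - rival_max cG w\<bar> \<le> 1"
      using close by (rule rival_max_close)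
    then have "measure (laplace b) {aL<..aL+dL} \<le> \<kappa> * measure (laplace b) {aG<..aG+dG}"
      unfolding \<kappa>_def using xLG dLG
      by (intro measure_laplace_interval_compare[OF scale_pos dG dL])
        (auto simp: aL_def aG_def abs_le_iff)
    moreover have "{rival_max cL w - xL <.. rival_max cL w - (xL - dL)} = {aL<..aL+dL}"
      "{rival_max cG w - (xG + dG) <.. rival_max cG w - xG} = {aG<..aG+dG}"
      by (simp_all add: aL_def aG_def algebra_simps)
    ultimately show "emeasure (laplace b) {rival_max cL w - xL <.. rival_max cL w - (xL - dL)}
        \<le> ennreal \<kappa> * emeasure (laplace b) {rival_max cG w - (xG + dG) <.. rival_max cG w - xG}"
      using \<kappa> by (simp add: Lap.emeasure_eq_measure ennreal_mult[symmetric] ennreal_leI)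
  qed
  also have "\<dots> = ennreal \<kappa> * ennreal (win_prob cG (xG + dG) - win_prob cG xG)"
    using dG by (simp add: nn_integral_cmult borel_measurable_laplace_rival_interval win_prob_increment)
  also have "\<dots> = ennreal (\<kappa> * (win_prob cG (xG + dG) - win_prob cG xG))"
    using \<kappa> dG win_prob_mono[of xG "xG + dG" cG] by (simp add: ennreal_mult)
  finally have "ennreal (win_prob cL xL - win_prob cL (xL - dL))
      \<le> ennreal (\<kappa> * (win_prob cG (xG + dG) - win_prob cG xG))" .
  moreover have "0 \<le> \<kappa> * (win_prob cG (xG + dG) - win_prob cG xG)"
    using \<kappa> dG win_prob_mono[of xG "xG + dG" cG] by simp
  ultimately show ?thesis unfolding \<kappa>_def by (simp only: ennreal_le_iff)
qed

lemma win_prob_weighted_gain_pos: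
  assumes \<pi>: "0 \<le> \<pi>" "\<pi> \<le> 1"
    and close: "\<And>j. j < n \<Longrightarrow> j \<noteq> i \<Longrightarrow> \<bar>cL j - cG j\<bar> \<le> 1"
    and xLG: "\<bar>xL - xG\<bar> \<le> 1" and dL: "0 \<le> dL" and dG: "0 < dG" and dLG: "dL + dG \<le> 2"
    and tradeoff: "\<pi> * dL * exp (4 / b) < (1 - \<pi>) * dG"
  shows "0 < \<pi> * (win_prob cL (xL - dL) - win_prob cL xL)
    + (1 - \<pi>) * (win_prob cG (xG + dG) - win_prob cG xG)"
proof -
  define G where "G = win_prob cG (xG + dG) - win_prob cG xG"
  have G: "0 < G" unfolding G_def using win_prob_strict_mono[OF dG] by simp
  have "\<pi> * (win_prob cL xL - win_prob cL (xL - dL)) \<le> \<pi> * (dL / dG * exp (4 / b) * G)"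
    unfolding G_def using \<pi> by (intro mult_left_mono win_prob_loss_le_gain[OF close xLG dL dG dLG])
  also have "\<dots> = (\<pi> * dL * exp (4 / b)) / dG * G" by simp
  also have "\<dots> < ((1 - \<pi>) * dG) / dG * G"
    using tradeoff dG G by (intro mult_strict_right_mono divide_strict_right_mono)
  also have "\<dots> = (1 - \<pi>) * G" using dG by simp
  finally show ?thesis unfolding G_def by (simp add: algebra_simps)
qed

end

lemma quad_score_flip: "quad_score (1 - q) y = quad_score q (1 - y)"
  by (simp add: quad_score_def power2_eq_square algebra_simps)

text \<open>Expected loss, inflated by \<open>exp \<gamma>\<close>, against expected gain of reporting the belief p
  instead of u under the quadratic score.\<close>
lemma quadratic_score_tradeoff:
  fixes p u \<gamma> :: real
  assumes p: "0 \<le> p" and u: "u \<le> 1" and far: "p + \<gamma> < u" and \<gamma>: "0 < \<gamma>" "\<gamma> \<le> 1"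
  shows "p * ((1 - p)\<^sup>2 - (1 - u)\<^sup>2) * exp \<gamma> < (1 - p) * (u\<^sup>2 - p\<^sup>2)"
proof -
  define h where "h = u - p"
  have h: "\<gamma> < h" using far unfolding h_def by simp
  have exp_le: "exp \<gamma> \<le> 1 + 2 * \<gamma>"
  proof -
    have "exp \<gamma> \<le> 1 + \<gamma> + \<gamma>\<^sup>2" using exp_bound[of \<gamma>] \<gamma> by simp
    moreover have "\<gamma>\<^sup>2 \<le> \<gamma>" using \<gamma> by (simp add: power2_eq_square mult_left_le_one_le)
    ultimately show ?thesis by simp
  qed
  have loss_nonneg: "0 \<le> p * (2 - u - p)" using p u far \<gamma> by simp
  have loss_le: "p * (2 - u - p) \<le> 1/2"
  proof -
    have "p * (2 - u - p) \<le> p * (2 - 2 * p)" using p far \<gamma> by (intro mult_left_mono) auto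
    also have "\<dots> \<le> 1/2" using sum_squares_ge_zero[of "2*p - 1" 0] by (simp add: power2_eq_square algebra_simps)
    finally show ?thesis .
  qed
  have "p * (2 - u - p) * exp \<gamma> \<le> p * (2 - u - p) + p * (2 - u - p) * (2 * \<gamma>)"
    using mult_left_mono[OF exp_le loss_nonneg] by (simp add: algebra_simps)
  also have "\<dots> \<le> p * (2 - u - p) + 1/2 * (2 * \<gamma>)"
    using loss_le \<gamma> by (intro add_left_mono mult_right_mono) auto
  also have "\<dots> < (1 - p) * (u + p)" using h unfolding h_def by (simp add: algebra_simps)
  finally have "h * (p * (2 - u - p) * exp \<gamma>) < h * ((1 - p) * (u + p))" using h \<gamma> by simp
  moreover have "(1 - p)\<^sup>2 - (1 - u)\<^sup>2 = h * (2 - u - p)" "u\<^sup>2 - p\<^sup>2 = h * (u + p)"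
    unfolding h_def by (simp_all add: power2_eq_square algebra_simps)
  ultimately show ?thesis by (simp only:) (simp add: algebra_simps)
qed

definition outcome_prob_on :: "nat set \<Rightarrow> (nat \<Rightarrow> real) \<Rightarrow> nat set \<Rightarrow> real" where
  "outcome_prob_on S p Z = (\<Prod>s\<in>S. if s \<in> Z then p s else 1 - p s)"

lemma outcome_prob_on_nonneg:
  "(\<And>s. s \<in> S \<Longrightarrow> 0 \<le> p s \<and> p s \<le> 1) \<Longrightarrow> 0 \<le> outcome_prob_on S p Z"
  unfolding outcome_prob_on_def by (intro prod_nonneg) auto

lemma outcome_prob_on_likely_pos:
  "finite S \<Longrightarrow> (\<And>s. s \<in> S \<Longrightarrow> 0 \<le> p s \<and> p s \<le> 1) \<Longrightarrow> 0 < outcome_prob_on S p {s \<in> S. 1/2 \<le> p s}"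
  unfolding outcome_prob_on_def by (intro prod_pos) auto

lemma sum_outcome_prob_split:
  fixes f :: "nat set \<Rightarrow> real"
  assumes t: "t < m"
  defines "S \<equiv> {..<m} - {t}"
  shows "(\<Sum>Y\<in>Pow {..<m}. outcome_prob m p Y * f Y)
    = (\<Sum>Z\<in>Pow S. outcome_prob_on S p Z * (p t * f (insert t Z) + (1 - p t) * f Z))"
proof -
  have m: "{..<m} = insert t S" and tS: "t \<notin> S" and S: "finite S"
    using t unfolding S_def by auto
  have without_t: "outcome_prob m p Z = (1 - p t) * outcome_prob_on S p Z" if "Z \<in> Pow S" for Z
    using that tS S unfolding outcome_prob_def outcome_prob_on_def m by (auto simp: prod.insert)
  have with_t: "outcome_prob m p (insert t Z) = p t * outcome_prob_on S p Z" if "Z \<in> Pow S" for Z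
  proof -
    have "(\<Prod>s\<in>S. if s \<in> insert t Z then p s else 1 - p s) = outcome_prob_on S p Z"
      unfolding outcome_prob_on_def using tS by (intro prod.cong) auto
    then show ?thesis unfolding outcome_prob_def m using S tS by (simp add: prod.insert)
  qed
  have "inj_on (insert t) (Pow S)" and "Pow S \<inter> insert t ` Pow S = {}"
    using tS by (auto simp: inj_on_def)
  then have "(\<Sum>Y\<in>Pow {..<m}. outcome_prob m p Y * f Y)
      = (\<Sum>Z\<in>Pow S. outcome_prob m p Z * f Z) + (\<Sum>Z\<in>Pow S. outcome_prob m p (insert t Z) * f (insert t Z))"
    using S unfolding m Pow_insert by (simp add: sum.union_disjoint sum.reindex)
  then show ?thesis
    using without_t with_t by (simp add: sum.distrib[symmetric] algebra_simps)
qed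

lemma total_score_fun_upd:
  assumes t: "t < m"
  shows "total_score m (r(t := v)) Y
    = total_score m r Y + quad_score v (outcome Y t) - quad_score (r t) (outcome Y t)"
proof -
  have "total_score m (r(t := v)) Y = quad_score v (outcome Y t) + (\<Sum>s\<in>{..<m} - {t}. quad_score (r s) (outcome Y s))"
    unfolding total_score_def using t by (subst sum.remove[of _ t]) (auto intro!: sum.cong)
  moreover have "total_score m r Y = quad_score (r t) (outcome Y t) + (\<Sum>s\<in>{..<m} - {t}. quad_score (r s) (outcome Y s))"
    unfolding total_score_def using t by (subst sum.remove[of _ t]) auto
  ultimately show ?thesis by simp
qed

lemma total_score_insert:
  assumes t: "t < m" and tZ: "t \<notin> Z"
  shows "total_score m r (insert t Z) = total_score m r Z + (2 * r t - 1)"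
proof -
  have "total_score m r (insert t Z) = quad_score (r t) 1 + (\<Sum>s\<in>{..<m} - {t}. quad_score (r s) (outcome Z s))"
    unfolding total_score_def using t by (subst sum.remove[of _ t]) (auto simp: outcome_def intro!: sum.cong)
  moreover have "total_score m r Z = quad_score (r t) 0 + (\<Sum>s\<in>{..<m} - {t}. quad_score (r s) (outcome Z s))"
    unfolding total_score_def using t tZ by (subst sum.remove[of _ t]) (auto simp: outcome_def)
  ultimately show ?thesis by (simp add: quad_score_def power2_eq_square algebra_simps)
qed

context report_noisy_max
begin

lemma rnm_win_fun_upd:
  "rnm_win b n m (R(i := r)) Y i = win_prob (\<lambda>j. total_score m (R j) Y) (total_score m r Y)"
  unfolding rnm_win_def win_prob_def win_event_def by (rule arg_cong[where f = "measure Noise"]) auto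

lemma truthful_coordinate_gain:
  assumes \<gamma>: "0 < \<gamma>" "\<gamma> \<le> 1" "4 / b \<le> \<gamma>"
    and \<pi>: "0 \<le> \<pi>" and u: "u \<le> 1" and far: "\<pi> + \<gamma> < u"
    and close: "\<And>j. j < n \<Longrightarrow> j \<noteq> i \<Longrightarrow> \<bar>c1 j - c0 j\<bar> \<le> 1" and x10: "\<bar>x1 - x0\<bar> \<le> 1"
  shows "0 < \<pi> * (win_prob c1 (x1 + quad_score \<pi> 1 - quad_score u 1) - win_prob c1 x1)
    + (1 - \<pi>) * (win_prob c0 (x0 + quad_score \<pi> 0 - quad_score u 0) - win_prob c0 x0)"
proof -
  define dL where "dL = (1 - \<pi>)\<^sup>2 - (1 - u)\<^sup>2"
  define dG where "dG = u\<^sup>2 - \<pi>\<^sup>2"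
  have dL: "0 \<le> dL" unfolding dL_def using far \<gamma> u by (intro diff_ge_0_iff_ge[THEN iffD2] power_mono) auto
  have dG: "0 < dG" unfolding dG_def using far \<gamma> \<pi> by (simp add: power_strict_mono)
  have dLG: "dL + dG \<le> 2" unfolding dL_def dG_def using \<pi> u by (simp add: power2_eq_square algebra_simps)
  have "\<pi> * dL * exp (4 / b) \<le> \<pi> * dL * exp \<gamma>"
    using \<pi> dL \<gamma> by (intro mult_left_mono) auto
  also have "\<dots> < (1 - \<pi>) * dG"
    unfolding dL_def dG_def using quadratic_score_tradeoff[OF \<pi> u far \<gamma>(1,2)] .
  finally have "0 < \<pi> * (win_prob c1 (x1 - dL) - win_prob c1 x1)
      + (1 - \<pi>) * (win_prob c0 (x0 + dG) - win_prob c0 x0)"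
    using \<pi> far u \<gamma> by (intro win_prob_weighted_gain_pos[OF _ _ close x10 dL dG dLG]) auto
  moreover have "x1 + quad_score \<pi> 1 - quad_score u 1 = x1 - dL"
    "x0 + quad_score \<pi> 0 - quad_score u 0 = x0 + dG"
    unfolding dL_def dG_def quad_score_def by (simp_all add: algebra_simps)
  ultimately show ?thesis by (simp only:)
qed

lemma truthful_coordinate_gain_given_others:
  assumes \<gamma>: "0 < \<gamma>" "\<gamma> \<le> 1" "4 / b \<le> \<gamma>"
    and p: "valid_vec m p" and r: "valid_vec m r" and R: "\<forall>j<n. j \<noteq> i \<longrightarrow> valid_vec m (R j)"
    and t: "t < m" and far: "\<gamma> < \<bar>r t - p t\<bar>" and tZ: "t \<notin> Z"
  shows "0 < p t * (rnm_win b n m (R(i := r(t := p t))) (insert t Z) i - rnm_win b n m (R(i := r)) (insert t Z) i)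
    + (1 - p t) * (rnm_win b n m (R(i := r(t := p t))) Z i - rnm_win b n m (R(i := r)) Z i)"
proof -
  define c1 where "c1 = (\<lambda>j. total_score m (R j) (insert t Z))"
  define c0 where "c0 = (\<lambda>j. total_score m (R j) Z)"
  define x1 where "x1 = total_score m r (insert t Z)"
  define x0 where "x0 = total_score m r Z"
  have pt: "0 \<le> p t" "p t \<le> 1" and rt: "0 \<le> r t" "r t \<le> 1"
    using p r t unfolding valid_vec_def by auto
  have x10: "\<bar>x1 - x0\<bar> \<le> 1" "\<bar>x0 - x1\<bar> \<le> 1"
    using total_score_insert[OF t tZ, of r] rt unfolding x1_def x0_def by auto
  have close: "\<bar>c1 j - c0 j\<bar> \<le> 1" "\<bar>c0 j - c1 j\<bar> \<le> 1" if "j < n" "j \<noteq> i" for j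
  proof -
    have "0 \<le> R j t" "R j t \<le> 1" using R that t unfolding valid_vec_def by auto
    then show "\<bar>c1 j - c0 j\<bar> \<le> 1" "\<bar>c0 j - c1 j\<bar> \<le> 1"
      using total_score_insert[OF t tZ, of "R j"] unfolding c1_def c0_def by auto
  qed
  have win: "rnm_win b n m (R(i := r)) (insert t Z) i = win_prob c1 x1"
    "rnm_win b n m (R(i := r)) Z i = win_prob c0 x0"
    "rnm_win b n m (R(i := r(t := p t))) (insert t Z) i
      = win_prob c1 (x1 + quad_score (p t) 1 - quad_score (r t) 1)"
    "rnm_win b n m (R(i := r(t := p t))) Z i
      = win_prob c0 (x0 + quad_score (p t) 0 - quad_score (r t) 0)"
    unfolding c1_def c0_def x1_def x0_def rnm_win_fun_upd total_score_fun_upd[OF t]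
    using tZ by (simp_all add: outcome_def)
  from far consider "p t + \<gamma> < r t" | "(1 - p t) + \<gamma> < 1 - r t" by linarith
  then show ?thesis
  proof cases
    case 1
    show ?thesis
      unfolding win using truthful_coordinate_gain[OF \<gamma> pt(1) rt(2) 1 close(1) x10(1)] by simp
  next
    case 2
    text \<open>Mirror the event: reporting \<open>1 - q\<close> on the complement scores like reporting q.\<close>
    have "0 < (1 - p t) * (win_prob c0 (x0 + quad_score (1 - p t) 1 - quad_score (1 - r t) 1) - win_prob c0 x0)
        + (1 - (1 - p t)) * (win_prob c1 (x1 + quad_score (1 - p t) 0 - quad_score (1 - r t) 0) - win_prob c1 x1)"
      using pt rt by (intro truthful_coordinate_gain[OF \<gamma> _ _ 2 close(2) x10(2)]) auto
    then show ?thesis unfolding win by (simp add: quad_score_flip algebra_simps)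
  qed
qed

lemma truthful_coordinate_dominates:
  assumes \<gamma>: "0 < \<gamma>" "\<gamma> \<le> 1" "4 / b \<le> \<gamma>"
    and p: "valid_vec m p" and r: "valid_vec m r" and R: "\<forall>j<n. j \<noteq> i \<longrightarrow> valid_vec m (R j)"
    and t: "t < m" and far: "\<gamma> < \<bar>r t - p t\<bar>"
  shows "rnm_win_exp b n m (R(i := r)) p i < rnm_win_exp b n m (R(i := r(t := p t))) p i"
proof -
  define S where "S = {..<m} - {t}"
  define gain where "gain Z = p t * (rnm_win b n m (R(i := r(t := p t))) (insert t Z) i - rnm_win b n m (R(i := r)) (insert t Z) i)
    + (1 - p t) * (rnm_win b n m (R(i := r(t := p t))) Z i - rnm_win b n m (R(i := r)) Z i)" for Z
  have S: "finite S" "\<And>s. s \<in> S \<Longrightarrow> 0 \<le> p s \<and> p s \<le> 1"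
    using p unfolding S_def valid_vec_def by auto
  have gain_pos: "0 < gain Z" if "Z \<in> Pow S" for Z
    unfolding gain_def using that
    by (intro truthful_coordinate_gain_given_others[OF \<gamma> p r R t far]) (auto simp: S_def)
  have "rnm_win_exp b n m (R(i := r(t := p t))) p i - rnm_win_exp b n m (R(i := r)) p i
      = (\<Sum>Y\<in>Pow {..<m}. outcome_prob m p Y
          * (rnm_win b n m (R(i := r(t := p t))) Y i - rnm_win b n m (R(i := r)) Y i))"
    by (simp add: rnm_win_exp_def sum_subtractf[symmetric] right_diff_distrib)
  also have "\<dots> = (\<Sum>Z\<in>Pow S. outcome_prob_on S p Z * gain Z)"
    unfolding sum_outcome_prob_split[OF t] S_def gain_def ..
  also have "\<dots> > 0"
  proof (rule sum_pos2)
    show "0 < outcome_prob_on S p {s \<in> S. 1/2 \<le> p s} * gain {s \<in> S. 1/2 \<le> p s}"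
      using outcome_prob_on_likely_pos[OF S] gain_pos by auto
    show "0 \<le> outcome_prob_on S p Z * gain Z" if "Z \<in> Pow S" for Z
      using outcome_prob_on_nonneg[OF S(2)] gain_pos[OF that] by simp
  qed (use S in auto)
  finally show ?thesis by simp
qed

lemma continuous_on_rnm_win_exp: "continuous_on UNIV (\<lambda>r. rnm_win_exp b n m (R(i := r)) p i)"
proof -
  have "continuous_on UNIV (\<lambda>r. total_score m r Y)" for Y
    unfolding total_score_def quad_score_def
    by (intro continuous_intros continuous_on_product_coordinates)
  then have "continuous_on UNIV (\<lambda>r. win_prob (\<lambda>j. total_score m (R j) Y) (total_score m r Y))" for Y
    by (rule continuous_on_compose2[OF continuous_on_win_prob]) auto
  then show ?thesis
    unfolding rnm_win_exp_def rnm_win_fun_upd by (intro continuous_intros) auto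
qed

lemma undominated_report_exists:
  assumes "valid_vec m p"
  shows "\<exists>r. valid_vec m r \<and> undominated b n m i p r"
proof -
  define R0 :: "nat \<Rightarrow> nat \<Rightarrow> real" where "R0 = (\<lambda>_ _. 0)"
  define F where "F r = rnm_win_exp b n m (R0(i := r)) p i" for r
  define K where "K = PiE UNIV (\<lambda>t::nat. if t < m then {0..1::real} else {0})"
  have "compactin (product_topology (\<lambda>_. euclidean) UNIV) K"
    unfolding K_def by (subst compactin_PiE) auto
  then have "compact K" by (simp add: euclidean_product_topology)
  moreover have "(\<lambda>_. 0) \<in> K" unfolding K_def by auto
  moreover have "continuous_on K F"
    unfolding F_def by (rule continuous_on_subset[OF continuous_on_rnm_win_exp]) auto
  ultimately obtain r where r: "r \<in> K" and r_max: "\<And>r'. r' \<in> K \<Longrightarrow> F r' \<le> F r"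
    using continuous_attains_sup[of K F] by blast
  have "valid_vec m r"
    using r unfolding K_def valid_vec_def PiE_iff by (metis UNIV_I atLeastAtMost_iff)
  moreover have "undominated b n m i p r"
    unfolding undominated_def
  proof
    assume "\<exists>rh. valid_vec m rh \<and> strictly_dominates b n m i p rh r"
    then obtain rh where rh: "valid_vec m rh" and "strictly_dominates b n m i p rh r" by blast
    then have "F r < F rh"
      unfolding strictly_dominates_def F_def R0_def valid_vec_def by auto
    moreover define rh' where "rh' t = (if t < m then rh t else 0)" for t
    have "rh' \<in> K" using rh unfolding K_def rh'_def valid_vec_def by (auto simp: PiE_iff)
    moreover have "total_score m rh Y = total_score m rh' Y" for Y
      unfolding total_score_def rh'_def by (rule sum.cong) auto
    then have "F rh = F rh'" unfolding F_def rnm_win_exp_def rnm_win_fun_upd by simp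
    ultimately show False using r_max by fastforce
  qed
  ultimately show ?thesis by blast
qed

end

theorem mainTheorem16:
  fixes n m :: nat and \<gamma> :: real
  assumes "2 \<le> n" and "0 < \<gamma>" and "\<gamma> \<le> 1"
  shows "approx_truthful (4 / \<gamma>) n m \<gamma>"
  unfolding approx_truthful_def
proof (intro allI impI conjI)
  fix i p assume i: "i < n" and p: "valid_vec m p"
  interpret report_noisy_max "4 / \<gamma>" n i
    using assms i by unfold_locales auto
  show "\<exists>r. valid_vec m r \<and> undominated (4 / \<gamma>) n m i p r"
    using p by (rule undominated_report_exists)
  show "\<bar>r t - p t\<bar> \<le> \<gamma>" if r: "valid_vec m r \<and> undominated (4 / \<gamma>) n m i p r" and t: "t < m"
    for r t
  proof (rule ccontr)
    assume "\<not> \<bar>r t - p t\<bar> \<le> \<gamma>"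
    then have far: "\<gamma> < \<bar>r t - p t\<bar>" by simp
    have "strictly_dominates (4 / \<gamma>) n m i p (r(t := p t)) r"
      unfolding strictly_dominates_def
      using r assms p t far by (auto intro!: truthful_coordinate_dominates)
    moreover have "valid_vec m (r(t := p t))"
      using r p t unfolding valid_vec_def by auto
    ultimately show False using r unfolding undominated_def by blast
  qed
qed

end
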